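(* Let $m$ be a non-negative integer and let $z\in\mathbb{C}$ with $\operatorname{Re} z>m$. Then $$\frac{2^{z-1}}{\sqrt{\pi}}\,\Gamma\!\left(\frac{z+m+1}{2}\right)\Gamma\!\left(\frac{z-m}{2}\right)=\sum_{n=0}^{m}\frac{\Gamma(z-n)}{2^n\,n!}\,(m-n+1)_{2n}.$$
   Context: $\Gamma$ denotes Euler's gamma function. $(a)_k$ denotes the Pochhammer symbol (rising factorial): $(a)_0=1$ and $(a)_k=a(a+1)\cdots(a+k-1)$ for integers $k\ge 1$. *)

theory Defs
  imports "HOL-Analysis.Analysis"
begin

end

theory Submission
  imports Defs
begin

text \<open>
  Write \<open>L(m, z)\<close> for the left-hand side. Legendre's duplication formula gives
  \<open>L(0, z) = \<Gamma>(z)\<close>, and \<open>\<Gamma>(w + 1) = w \<Gamma>(w)\<close> applied to the first Gamma factor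
  gives \<open>L(m + 1, z) = (z + m) L(m, z - 1)\<close>. The right-hand side is \<open>\<Sum>\<^sub>n c(m, n) \<Gamma>(z - n)\<close>
  with the Bessel polynomial coefficients \<open>c(m, n) = (m + n)! / ((m - n)! n! 2\<^sup>n)\<close>.
  Splitting \<open>(z + m) \<Gamma>(z - 1 - n) = \<Gamma>(z - n) + (m + n + 1) \<Gamma>(z - 1 - n)\<close> shows that
  it satisfies the same recurrence, because \<open>c(m + 1, n + 1) = c(m, n + 1) + (m + n + 1) c(m, n)\<close>;
  induction on \<open>m\<close> concludes.
\<close>

text \<open>Zero for \<open>n > m\<close>, so that sums over \<open>{0..m}\<close> and \<open>{0..Suc m}\<close> agree.\<close>

definition bessel_coeff :: "nat \<Rightarrow> nat \<Rightarrow> 'a :: field_char_0" where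
  "bessel_coeff m n = (if n \<le> m then fact (m + n) / (fact (m - n) * fact n * 2 ^ n) else 0)"

lemma bessel_coeff_0 [simp]: "bessel_coeff m 0 = 1"
  by (simp add: bessel_coeff_def)

lemma bessel_coeff_eq_0: "m < n \<Longrightarrow> bessel_coeff m n = 0"
  by (simp add: bessel_coeff_def)

lemma bessel_coeff_Suc_Suc:
  "bessel_coeff (Suc m) (Suc k) = bessel_coeff m (Suc k) + of_nat (m + k + 1) * bessel_coeff m k"
proof -
  consider j where "m = k + Suc j" | "k = m" | "m < k"
    by (metis less_imp_Suc_add add_Suc_right linorder_neqE_nat)
  then show ?thesis
  proof cases
    case 1
    define F :: 'a where "F = fact (2*k+j+1) / (fact j * fact k * 2^k)"
    define a :: 'a where "a = of_nat (2*k+j+2)"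
    have idx: "m + k = 2*k+j+1" "m - k = Suc j" "m + Suc k = Suc (2*k+j+1)" "m - Suc k = j"
      "Suc m + Suc k = Suc (Suc (2*k+j+1))" "Suc m - Suc k = Suc j"
      using 1 by simp_all
    have "bessel_coeff m k = F / of_nat (Suc j)"
      and "bessel_coeff m (Suc k) = F * a / (2 * of_nat (Suc k))"
      and "bessel_coeff (Suc m) (Suc k) = F * (a + 1) * a / (of_nat (Suc j) * 2 * of_nat (Suc k))"
      unfolding bessel_coeff_def idx F_def a_def using 1 by (simp_all add: field_simps)
    moreover have "of_nat (m + k + 1) = a" and "a + 1 = of_nat (Suc j) + 2 * of_nat (Suc k)"
      unfolding a_def 1 by simp_all
    ultimately show ?thesis
      by (simp only:) (simp add: field_simps del: of_nat_Suc)
  next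
    case 2
    define F :: 'a where "F = fact (m+m) / (fact m * 2^m)"
    have idx: "Suc m + Suc m = Suc (Suc (m + m))" by simp
    have "bessel_coeff (Suc m) (Suc m)
          = F * of_nat (Suc (m+m)) * of_nat (Suc (Suc (m+m))) / (2 * of_nat (Suc m))"
      and "bessel_coeff m m = F"
      unfolding bessel_coeff_def idx F_def by (simp_all add: field_simps)
    moreover have "(of_nat (Suc (Suc (m+m))) :: 'a) = 2 * of_nat (Suc m)"
      by simp
    ultimately have "bessel_coeff (Suc m) (Suc m) = of_nat (m + m + 1) * (bessel_coeff m m :: 'a)"
      by (simp del: of_nat_Suc)
    with 2 show ?thesis by (simp add: bessel_coeff_eq_0)
  qed (simp add: bessel_coeff_def)
qed

lemma fact_add_eq_fact_mult_pochhammer: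
  "(fact (j + i) :: 'a :: {comm_semiring_1, semiring_char_0})
     = fact j * pochhammer (of_nat (j + 1)) i"
  using pochhammer_product'[of "1 :: 'a" j i] by (simp add: pochhammer_fact add.commute)

lemma bessel_coeff_pochhammer:
  assumes "n \<le> m"
  shows "bessel_coeff m n = pochhammer (of_nat (m - n + 1)) (2 * n) / (2 ^ n * fact n)"
proof -
  have "fact (m + n) = (fact (m - n) * pochhammer (of_nat (m - n + 1)) (2 * n) :: 'a)"
    using fact_add_eq_fact_mult_pochhammer[of "m - n" "2 * n"] assms
    by (simp only: le_add_diff_inverse2 mult_2 add.assoc[symmetric])
  then show ?thesis
    using assms by (simp add: bessel_coeff_def field_simps)
qed

lemma bessel_coeff_sum_Suc:
  fixes G :: "nat \<Rightarrow> 'a :: field_char_0"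
  assumes G: "\<And>n. n \<le> m \<Longrightarrow> (w - of_nat n) * G (Suc n) = G n"
  shows "(\<Sum>n=0..Suc m. bessel_coeff (Suc m) n * G n)
         = (w + of_nat (Suc m)) * (\<Sum>n=0..m. bessel_coeff m n * G (Suc n))"
proof -
  have "(\<Sum>n=0..Suc m. bessel_coeff (Suc m) n * G n)
        = G 0 + (\<Sum>n=0..m. bessel_coeff (Suc m) (Suc n) * G (Suc n))"
    by (subst sum.atLeast0_atMost_Suc_shift) simp
  also have "\<dots> = G 0 + (\<Sum>n=0..m. bessel_coeff m (Suc n) * G (Suc n))
          + (\<Sum>n=0..m. of_nat (m + n + 1) * bessel_coeff m n * G (Suc n))"
    by (simp only: bessel_coeff_Suc_Suc distrib_right sum.distrib add.assoc)
  also have "G 0 + (\<Sum>n=0..m. bessel_coeff m (Suc n) * G (Suc n))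
        = (\<Sum>n=0..m. bessel_coeff m n * G n)"
    using sum.atLeast0_atMost_Suc_shift[of "\<lambda>n. bessel_coeff m n * G n" m]
    by (simp add: bessel_coeff_eq_0)
  also have "\<dots> = (\<Sum>n=0..m. bessel_coeff m n * ((w - of_nat n) * G (Suc n)))"
    by (rule sum.cong) (simp_all add: G)
  also have "\<dots> + (\<Sum>n=0..m. of_nat (m + n + 1) * bessel_coeff m n * G (Suc n))
        = (w + of_nat (Suc m)) * (\<Sum>n=0..m. bessel_coeff m n * G (Suc n))"
    by (simp add: sum_distrib_left sum.distrib[symmetric] algebra_simps)
  finally show ?thesis .
qed

lemma Re_pos_not_nonpos_Ints: "0 < Re z \<Longrightarrow> z \<notin> \<int>\<^sub>\<le>\<^sub>0"
  by (auto elim!: nonpos_Ints_cases)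

definition legendre_product :: "nat \<Rightarrow> complex \<Rightarrow> complex" where
  "legendre_product m z =
     2 powr (z - 1) / complex_of_real (sqrt pi)
       * Gamma ((z + of_nat m + 1) / 2) * Gamma ((z - of_nat m) / 2)"

lemma legendre_product_0:
  assumes "z \<notin> \<int>\<^sub>\<le>\<^sub>0"
  shows "legendre_product 0 z = Gamma z"
proof -
  have "z / 2 \<notin> \<int>\<^sub>\<le>\<^sub>0"
    using Nats_mult_nonpos_Ints[of 2 "z / 2"] assms by auto
  moreover have "z / 2 + 1 / 2 \<notin> \<int>\<^sub>\<le>\<^sub>0"
    using nonpos_Ints_diff_Nats[OF Nats_mult_nonpos_Ints[of 2 "z / 2 + 1 / 2"], of 1] assms by auto
  ultimately have duplication:
    "Gamma (z / 2) * Gamma (z / 2 + 1 / 2) = exp ((1 - z) * of_real (ln 2)) * of_real (sqrt pi) * Gamma z"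
    using Gamma_legendre_duplication[of "z / 2"] by simp
  have "legendre_product 0 z
        = exp ((z - 1) * of_real (ln 2)) / of_real (sqrt pi) * (Gamma (z / 2) * Gamma (z / 2 + 1 / 2))"
    by (simp add: legendre_product_def powr_def Ln_of_real[symmetric] add_divide_distrib mult_ac)
  also have "\<dots> = exp ((z - 1) * of_real (ln 2)) * exp ((1 - z) * of_real (ln 2)) * Gamma z"
    using duplication by simp
  also have "exp ((z - 1) * of_real (ln 2)) * exp ((1 - z) * of_real (ln 2)) = (1 :: complex)"
    by (simp add: exp_add[symmetric] algebra_simps)
  finally show ?thesis
    by simp
qed

lemma legendre_product_Suc:
  assumes "(z + of_nat m) / 2 \<notin> \<int>\<^sub>\<le>\<^sub>0"
  shows "legendre_product (Suc m) z = (z + of_nat m) * legendre_product m (z - 1)"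
proof -
  have shift: "(z + of_nat (Suc m) + 1) / 2 = (z + of_nat m) / 2 + 1"
    by (simp add: field_simps)
  have Gamma_eq:
    "Gamma ((z + of_nat (Suc m) + 1) / 2) = (z + of_nat m) / 2 * Gamma ((z + of_nat m) / 2)"
    unfolding shift by (rule Gamma_plus1[OF assms])
  have powr_eq: "(2 :: complex) powr (z - 1) = 2 * 2 powr (z - 1 - 1)"
    using powr_add[of "2 :: complex" "z - 1 - 1" 1] by simp
  have args: "z - 1 + of_nat m + 1 = z + of_nat m" "z - of_nat (Suc m) = z - 1 - of_nat m"
    by simp_all
  show ?thesis
    unfolding legendre_product_def Gamma_eq powr_eq args by (simp add: mult_ac)
qed

lemma legendre_product_eq_bessel_sum:
  "Re z > of_nat m
    \<Longrightarrow> legendre_product m z = (\<Sum>n=0..m. bessel_coeff m n * Gamma (z - of_nat n))"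
proof (induction m arbitrary: z)
  case 0
  then show ?case by (simp add: legendre_product_0 Re_pos_not_nonpos_Ints)
next
  case (Suc m)
  have "(z + of_nat m) / 2 \<notin> \<int>\<^sub>\<le>\<^sub>0"
    using Suc.prems by (intro Re_pos_not_nonpos_Ints) simp
  then have "legendre_product (Suc m) z = (z + of_nat m) * legendre_product m (z - 1)"
    by (rule legendre_product_Suc)
  also have "\<dots> = (z + of_nat m) * (\<Sum>n=0..m. bessel_coeff m n * Gamma (z - of_nat (Suc n)))"
    using Suc by (simp add: algebra_simps)
  also have "\<dots> = (z - 1 + of_nat (Suc m))
                   * (\<Sum>n=0..m. bessel_coeff m n * Gamma (z - of_nat (Suc n)))"
    by simp
  also have "\<dots> = (\<Sum>n=0..Suc m. bessel_coeff (Suc m) n * Gamma (z - of_nat n))"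
  proof (rule bessel_coeff_sum_Suc[where G = "\<lambda>n. Gamma (z - of_nat n)", symmetric])
    fix n assume "n \<le> m"
    then have "z - of_nat (Suc n) \<notin> \<int>\<^sub>\<le>\<^sub>0"
      using Suc.prems by (intro Re_pos_not_nonpos_Ints) simp
    from Gamma_plus1[OF this]
    show "(z - 1 - of_nat n) * Gamma (z - of_nat (Suc n)) = Gamma (z - of_nat n)"
      by (simp add: algebra_simps)
  qed
  finally show ?case .
qed

theorem mainTheorem1:
  fixes m :: nat and z :: complex
  assumes "Re z > real m"
  shows "(2 powr (z - 1) / complex_of_real (sqrt pi)) * Gamma ((z + of_nat m + 1) / 2)
           * Gamma ((z - of_nat m) / 2)
         = (\<Sum>n=0..m. Gamma (z - of_nat n) / (2 ^ n * of_nat (fact n))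
              * pochhammer (of_nat (m - n + 1)) (2 * n))"
proof -
  have "legendre_product m z = (\<Sum>n=0..m. bessel_coeff m n * Gamma (z - of_nat n))"
    using assms by (rule legendre_product_eq_bessel_sum)
  also have "\<dots> = (\<Sum>n=0..m. Gamma (z - of_nat n) / (2 ^ n * of_nat (fact n))
              * pochhammer (of_nat (m - n + 1)) (2 * n))"
    by (rule sum.cong) (simp_all add: bessel_coeff_pochhammer)
  finally show ?thesis
    unfolding legendre_product_def .
qed

end
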